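(* Let $\mathbb{E}$ be a finitely complete category, $\Sigma$ a fibrational class of split epimorphisms, and suppose $\mathbb{E}$ is a $\Sigma$-Mal'tsev category. Let $R$ be an equivalence relation and $S$ a $\Sigma$-equivalence relation on an object $X$. If $R\cap S=\Delta_X$ (the discrete relation), then $[R,S]=0$.
   Context: A split epimorphism is a pair $(f,s)$ with $fs=1$. A class $\Sigma$ of split epimorphisms is fibrational if it contains all split epimorphisms $(f,s)$ with $f$ invertible and is stable under pullback along any morphism. A pair of morphisms with common codomain $Z$ is jointly extremally epic if it factors jointly through no non-invertible monomorphism into $Z$. $\mathbb{E}$ is $\Sigma$-Mal'tsev if for every split epimorphism $(f,s)\colon X\rightleftarrows Y$ in $\Sigma$ and every split epimorphism $(g,t)$ with $g\colon Y'\to Y$, letting $X'=Y'\times_YX$, $s'=(1_{Y'},sg)$, $\bar t=(tf,1_X)$, the pair $(s',\bar t)$ is jointly extremally epic. A $\Sigma$-relation is a reflexive relation $(d_0,d_1)\colon S\rightarrowtail X\times X$ with reflexivity $s_0$ such that $(d_0,s_0)\in\Sigma$; a $\Sigma$-equivalence relation is an equivalence relation which is a $\Sigma$-relation. For reflexive relations $R$ and $S$ on $X$, let $R\times_XS$ be the pullback of $d_0^S$ along $d_1^R$ (elements $xRySz$), $\sigma_0^R=(1_R,s_0^Sd_1^R)\colon R\to R\times_XS$ ($xRy\mapsto xRySy$) and $\sigma_0^S=(s_0^Rd_0^S,1_S)\colon S\to R\times_XS$ ($ySz\mapsto yRySz$). We write $[R,S]=0$ ($R$ and $S$ centralize each other)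 when there is a morphism $p\colon R\times_XS\to X$ (a connector) with $p\sigma_0^R=d_0^R$ and $p\sigma_0^S=d_1^S$, i.e. $p(xRySy)=x$ and $p(yRySz)=z$. *)

theory Defs
  imports Main
begin

record ('o, 'a) cat =
  Ob  :: "'o set"
  Ar  :: "'a set"
  Dom :: "'a \<Rightarrow> 'o"
  Cod :: "'a \<Rightarrow> 'o"
  Comp :: "'a \<Rightarrow> 'a \<Rightarrow> 'a"   (* Comp C g f = g \<circ> f, defined when Cod f = Dom g *)
  Id  :: "'o \<Rightarrow> 'a"

definition hom :: "('o, 'a) cat \<Rightarrow> 'a \<Rightarrow> 'o \<Rightarrow> 'o \<Rightarrow> bool" where
  "hom C f X Y \<longleftrightarrow> f \<in> Ar C \<and> Dom C f = X \<and> Cod C f = Y"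

definition is_category :: "('o, 'a) cat \<Rightarrow> bool" where
  "is_category C \<longleftrightarrow>
     (\<forall>f \<in> Ar C. Dom C f \<in> Ob C \<and> Cod C f \<in> Ob C) \<and>
     (\<forall>X \<in> Ob C. hom C (Id C X) X X) \<and>
     (\<forall>f g. f \<in> Ar C \<and> g \<in> Ar C \<and> Cod C f = Dom C g \<longrightarrow>
        hom C (Comp C g f) (Dom C f) (Cod C g)) \<and>
     (\<forall>f g h. f \<in> Ar C \<and> g \<in> Ar C \<and> h \<in> Ar C \<and> Cod C f = Dom C g \<and> Cod C g = Dom C h \<longrightarrow>
        Comp C h (Comp C g f) = Comp C (Comp C h g) f) \<and>
     (\<forall>f \<in> Ar C. Comp C f (Id C (Dom C f)) = f \<and> Comp C (Id C (Cod C f)) f = f)"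

definition is_pullback :: "('o, 'a) cat \<Rightarrow> 'a \<Rightarrow> 'a \<Rightarrow> 'o \<Rightarrow> 'a \<Rightarrow> 'a \<Rightarrow> bool" where
  "is_pullback C f g P p q \<longleftrightarrow>
     f \<in> Ar C \<and> g \<in> Ar C \<and> Cod C f = Cod C g \<and>
     hom C p P (Dom C f) \<and> hom C q P (Dom C g) \<and> Comp C f p = Comp C g q \<and>
     (\<forall>T u v. hom C u T (Dom C f) \<and> hom C v T (Dom C g) \<and> Comp C f u = Comp C g v \<longrightarrow>
        (\<exists>!h. hom C h T P \<and> Comp C p h = u \<and> Comp C q h = v))"

definition is_terminal :: "('o, 'a) cat \<Rightarrow> 'o \<Rightarrow> bool" where
  "is_terminal C T \<longleftrightarrow> T \<in> Ob C \<and> (\<forall>X \<in> Ob C. \<exists>!h. hom C h X T)"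

definition finitely_complete :: "('o, 'a) cat \<Rightarrow> bool" where
  "finitely_complete C \<longleftrightarrow> is_category C \<and> (\<exists>T. is_terminal C T) \<and>
     (\<forall>f g. f \<in> Ar C \<and> g \<in> Ar C \<and> Cod C f = Cod C g \<longrightarrow> (\<exists>P p q. is_pullback C f g P p q))"

definition mono :: "('o, 'a) cat \<Rightarrow> 'a \<Rightarrow> bool" where
  "mono C m \<longleftrightarrow> m \<in> Ar C \<and>
     (\<forall>u v T. hom C u T (Dom C m) \<and> hom C v T (Dom C m) \<and> Comp C m u = Comp C m v \<longrightarrow> u = v)"

definition iso :: "('o, 'a) cat \<Rightarrow> 'a \<Rightarrow> bool" where
  "iso C f \<longleftrightarrow> f \<in> Ar C \<and> (\<exists>g. hom C g (Cod C f) (Dom C f) \<and>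
      Comp C g f = Id C (Dom C f) \<and> Comp C f g = Id C (Cod C f))"

definition split_epi :: "('o, 'a) cat \<Rightarrow> 'a \<Rightarrow> 'a \<Rightarrow> bool" where
  "split_epi C f s \<longleftrightarrow> f \<in> Ar C \<and> hom C s (Cod C f) (Dom C f) \<and> Comp C f s = Id C (Cod C f)"

definition fibrational :: "('o, 'a) cat \<Rightarrow> ('a \<Rightarrow> 'a \<Rightarrow> bool) \<Rightarrow> bool" where
  "fibrational C \<Sigma> \<longleftrightarrow>
     (\<forall>f s. \<Sigma> f s \<longrightarrow> split_epi C f s) \<and>
     (\<forall>f s. split_epi C f s \<and> iso C f \<longrightarrow> \<Sigma> f s) \<and>
     (\<forall>f s h P h' f' s'. \<Sigma> f s \<and> h \<in> Ar C \<and> Cod C h = Cod C f \<and>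
        is_pullback C f h P h' f' \<and>
        hom C s' (Dom C h) P \<and> Comp C f' s' = Id C (Dom C h) \<and> Comp C h' s' = Comp C s h
        \<longrightarrow> \<Sigma> f' s')"

definition jointly_extremally_epic :: "('o, 'a) cat \<Rightarrow> 'a \<Rightarrow> 'a \<Rightarrow> bool" where
  "jointly_extremally_epic C a b \<longleftrightarrow>
     a \<in> Ar C \<and> b \<in> Ar C \<and> Cod C a = Cod C b \<and>
     (\<forall>m M. mono C m \<and> hom C m M (Cod C a) \<and>
        (\<exists>u. hom C u (Dom C a) M \<and> Comp C m u = a) \<and>
        (\<exists>v. hom C v (Dom C b) M \<and> Comp C m v = b) \<longrightarrow> iso C m)"

text \<open>\<Sigma>-Mal'tsev: for (f,s): X \<rightleftarrows> Y in \<Sigma> and split epi (g,t) with g: Y' \<rightarrow> Y,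
  with X' = Y' \<times>_Y X (projections pi1: X' \<rightarrow> Y', pi2: X' \<rightarrow> X),
  s' = (1, s g) and tbar = (t f, 1), the pair (s', tbar) is jointly extremally epic.\<close>
definition Sigma_Maltsev :: "('o, 'a) cat \<Rightarrow> ('a \<Rightarrow> 'a \<Rightarrow> bool) \<Rightarrow> bool" where
  "Sigma_Maltsev C \<Sigma> \<longleftrightarrow>
     (\<forall>f s g t X' pi1 pi2 s' tb.
        \<Sigma> f s \<and> split_epi C g t \<and> Cod C g = Cod C f \<and>
        is_pullback C g f X' pi1 pi2 \<and>
        hom C s' (Dom C g) X' \<and> Comp C pi1 s' = Id C (Dom C g) \<and> Comp C pi2 s' = Comp C s g \<and>
        hom C tb (Dom C f) X' \<and> Comp C pi1 tb = Comp C t f \<and> Comp C pi2 tb = Id C (Dom C f)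
        \<longrightarrow> jointly_extremally_epic C s' tb)"

text \<open>A reflexive relation (d0, d1): S \<rightarrowtail> X \<times> X (a relation is a monomorphism into X \<times> X,
  i.e. a jointly monic pair) with reflexivity s0.\<close>
definition reflexive_relation :: "('o, 'a) cat \<Rightarrow> 'o \<Rightarrow> 'o \<Rightarrow> 'a \<Rightarrow> 'a \<Rightarrow> 'a \<Rightarrow> bool" where
  "reflexive_relation C X S d0 d1 s0 \<longleftrightarrow>
     hom C d0 S X \<and> hom C d1 S X \<and>
     (\<forall>u v T. hom C u T S \<and> hom C v T S \<and> Comp C d0 u = Comp C d0 v \<and> Comp C d1 u = Comp C d1 v
        \<longrightarrow> u = v) \<and>
     hom C s0 X S \<and> Comp C d0 s0 = Id C X \<and> Comp C d1 s0 = Id C X"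

definition equivalence_relation :: "('o, 'a) cat \<Rightarrow> 'o \<Rightarrow> 'o \<Rightarrow> 'a \<Rightarrow> 'a \<Rightarrow> 'a \<Rightarrow> bool" where
  "equivalence_relation C X S d0 d1 s0 \<longleftrightarrow>
     reflexive_relation C X S d0 d1 s0 \<and>
     (\<exists>\<sigma>. hom C \<sigma> S S \<and> Comp C d0 \<sigma> = d1 \<and> Comp C d1 \<sigma> = d0) \<and>
     (\<forall>T u v. hom C u T S \<and> hom C v T S \<and> Comp C d1 u = Comp C d0 v \<longrightarrow>
        (\<exists>w. hom C w T S \<and> Comp C d0 w = Comp C d0 u \<and> Comp C d1 w = Comp C d1 v))"

definition Sigma_equivalence_relation ::
    "('o, 'a) cat \<Rightarrow> ('a \<Rightarrow> 'a \<Rightarrow> bool) \<Rightarrow> 'o \<Rightarrow> 'o \<Rightarrow> 'a \<Rightarrow> 'a \<Rightarrow> 'a \<Rightarrow> bool" where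
  "Sigma_equivalence_relation C \<Sigma> X S d0 d1 s0 \<longleftrightarrow>
     equivalence_relation C X S d0 d1 s0 \<and> \<Sigma> d0 s0"

text \<open>R \<inter> S = \<Delta>_X: every generalised element of X \<times> X lying in both R and S is diagonal
  (R \<inter> S \<le> \<Delta>_X; the reverse inclusion holds by reflexivity).\<close>
definition meet_is_discrete ::
    "('o, 'a) cat \<Rightarrow> 'o \<Rightarrow> 'a \<Rightarrow> 'a \<Rightarrow> 'o \<Rightarrow> 'a \<Rightarrow> 'a \<Rightarrow> bool" where
  "meet_is_discrete C R d0R d1R S d0S d1S \<longleftrightarrow>
     (\<forall>T u v. hom C u T R \<and> hom C v T S \<and> Comp C d0R u = Comp C d0S v \<and> Comp C d1R u = Comp C d1S v
        \<longrightarrow> Comp C d0R u = Comp C d1R u)"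

text \<open>[R, S] = 0: for R \<times>_X S (pullback of d0S along d1R, projections pR, pS), there is a
  connector p: R \<times>_X S \<rightarrow> X with p sigmaR = d0R and p sigmaS = d1S, where
  sigmaR = (1_R, s0S d1R) and sigmaS = (s0R d0S, 1_S).\<close>
definition centralize ::
    "('o, 'a) cat \<Rightarrow> 'o \<Rightarrow> 'o \<Rightarrow> 'a \<Rightarrow> 'a \<Rightarrow> 'a \<Rightarrow> 'o \<Rightarrow> 'a \<Rightarrow> 'a \<Rightarrow> 'a \<Rightarrow> bool" where
  "centralize C X R d0R d1R s0R S d0S d1S s0S \<longleftrightarrow>
     (\<forall>P pR pS. is_pullback C d1R d0S P pR pS \<longrightarrow>
       (\<exists>p. hom C p P X \<and>
          (\<forall>sigR. hom C sigR R P \<and> Comp C pR sigR = Id C R \<and> Comp C pS sigR = Comp C s0S d1R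
             \<longrightarrow> Comp C p sigR = d0R) \<and>
          (\<forall>sigS. hom C sigS S P \<and> Comp C pR sigS = Comp C s0R d0S \<and> Comp C pS sigS = Id C S
             \<longrightarrow> Comp C p sigS = d1S)))"

end

theory Submission
  imports Defs
begin

text \<open>Write P = R \<times>_X S. Its two sections x R y \<mapsto> (x R y S y) and y S z \<mapsto> (y R y S z) are
  jointly extremally epic by the \<Sigma>-Mal'tsev property, applied to (d0S, s0S) \<in> \<Sigma> and the split
  epimorphism (d1R, s0R). Let M be the object of pairs (x R y S z, x S y' R z) with the same ends
  x, z. If x S y' R z and x S y'' R z then y' S y'' and y' R y'', so y' = y'' since R \<inter> S is
  discrete; hence the projection M \<rightarrow> P is a monomorphism. Both sections factor through it (take
  y' = x, resp. y' = z), so it is an isomorphism, and the connector sends x R y S z to y'.\<close>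

locale category =
  fixes C :: "('o, 'a) cat"
  assumes is_category: "is_category C"
begin

abbreviation arr_comp (infixr "\<cdot>" 55) where "g \<cdot> f \<equiv> Comp C g f"

lemmas ob_dom_cod = is_category[unfolded is_category_def, THEN conjunct1]
  and id_axiom = is_category[unfolded is_category_def, THEN conjunct2, THEN conjunct1]
  and comp_axiom = is_category[unfolded is_category_def, THEN conjunct2, THEN conjunct2, THEN conjunct1]
  and assoc_axiom = is_category[unfolded is_category_def, THEN conjunct2, THEN conjunct2, THEN conjunct2,
      THEN conjunct1]
  and unit_axiom = is_category[unfolded is_category_def, THEN conjunct2, THEN conjunct2, THEN conjunct2,
      THEN conjunct2]

lemma comp_hom [intro]: "hom C f A B \<Longrightarrow> hom C g B D \<Longrightarrow> hom C (g \<cdot> f) A D"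
  using comp_axiom unfolding hom_def by simp

lemma hom_dom_ob: "hom C f A B \<Longrightarrow> A \<in> Ob C"
  and hom_cod_ob: "hom C f A B \<Longrightarrow> B \<in> Ob C"
  using ob_dom_cod unfolding hom_def by auto

lemma id_hom [intro]: "A \<in> Ob C \<Longrightarrow> hom C (Id C A) A A"
  using id_axiom by blast

lemma comp_assoc: "hom C f A B \<Longrightarrow> hom C g B D \<Longrightarrow> hom C h D E \<Longrightarrow> (h \<cdot> g) \<cdot> f = h \<cdot> (g \<cdot> f)"
  using assoc_axiom unfolding hom_def by simp

lemma comp_id_right [simp]: "hom C f A B \<Longrightarrow> f \<cdot> Id C A = f"
  and comp_id_left [simp]: "hom C f A B \<Longrightarrow> Id C B \<cdot> f = f"
  using unit_axiom unfolding hom_def by auto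

lemma comp_reassoc:
  "g \<cdot> f = k \<Longrightarrow> hom C t T A \<Longrightarrow> hom C f A B \<Longrightarrow> hom C g B D \<Longrightarrow> g \<cdot> (f \<cdot> t) = k \<cdot> t"
  by (metis comp_assoc)

lemma comp_reassoc_id:
  "g \<cdot> f = Id C A \<Longrightarrow> hom C t T A \<Longrightarrow> hom C f A B \<Longrightarrow> hom C g B A \<Longrightarrow> g \<cdot> (f \<cdot> t) = t"
  by (metis comp_assoc comp_id_left)

lemma pullback_square:
  assumes "is_pullback C f g P p q" "hom C f A B" "hom C g D B"
  shows "hom C p P A" "hom C q P D" "f \<cdot> p = g \<cdot> q"
  using assms unfolding is_pullback_def hom_def by auto

lemma pullback_universal:
  assumes "is_pullback C f g P p q" "hom C f A B" "hom C g D B"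
    and "hom C u T A" "hom C v T D" "f \<cdot> u = g \<cdot> v"
  shows "\<exists>!h. hom C h T P \<and> p \<cdot> h = u \<and> q \<cdot> h = v"
proof -
  have "Dom C f = A" "Dom C g = D" using assms(2,3) unfolding hom_def by auto
  with assms show ?thesis unfolding is_pullback_def by simp
qed

lemma pullback_lift:
  assumes "is_pullback C f g P p q" "hom C f A B" "hom C g D B"
    and "hom C u T A" "hom C v T D" "f \<cdot> u = g \<cdot> v"
  obtains h where "hom C h T P" "p \<cdot> h = u" "q \<cdot> h = v"
  using pullback_universal[OF assms] by blast

lemma pullback_ext:
  assumes pb: "is_pullback C f g P p q" and f: "hom C f A B" and g: "hom C g D B"
    and h: "hom C h T P" and h': "hom C h' T P" and "p \<cdot> h = p \<cdot> h'" "q \<cdot> h = q \<cdot> h'"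
  shows "h = h'"
proof -
  note sq = pullback_square[OF pb f g]
  have "f \<cdot> (p \<cdot> h) = g \<cdot> (q \<cdot> h)"
    using comp_reassoc[OF sq(3) h sq(1) f] comp_assoc[OF h sq(2) g] by simp
  then have "\<exists>!k. hom C k T P \<and> p \<cdot> k = p \<cdot> h \<and> q \<cdot> k = q \<cdot> h"
    using pullback_universal[OF pb f g] h sq by blast
  then show ?thesis using h h' assms(6,7) by metis
qed

lemma monoI:
  assumes "hom C m A B" and "\<And>u v T. hom C u T A \<Longrightarrow> hom C v T A \<Longrightarrow> m \<cdot> u = m \<cdot> v \<Longrightarrow> u = v"
  shows "mono C m"
  using assms unfolding mono_def hom_def by blast

lemma monoD:
  "mono C m \<Longrightarrow> hom C m A B \<Longrightarrow> hom C u T A \<Longrightarrow> hom C v T A \<Longrightarrow> m \<cdot> u = m \<cdot> v \<Longrightarrow> u = v"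
  unfolding mono_def hom_def by blast

lemma mono_pullback:
  assumes pb: "is_pullback C f g P p q" and f: "hom C f A B" and g: "hom C g D B" and "mono C f"
  shows "mono C q"
proof (rule monoI)
  note sq = pullback_square[OF pb f g]
  show "hom C q P D" by (fact sq(2))
  fix u v T assume u: "hom C u T P" and v: "hom C v T P" and "q \<cdot> u = q \<cdot> v"
  then have "f \<cdot> (p \<cdot> u) = f \<cdot> (p \<cdot> v)"
    using comp_reassoc[OF sq(3) u sq(1) f] comp_reassoc[OF sq(3) v sq(1) f]
      comp_assoc[OF u sq(2) g] comp_assoc[OF v sq(2) g] by simp
  then have "p \<cdot> u = p \<cdot> v"
    using monoD[OF \<open>mono C f\<close> f] u v sq(1) by blast
  then show "u = v" using pullback_ext[OF pb f g u v] \<open>q \<cdot> u = q \<cdot> v\<close> by blast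
qed

end

definition is_product :: "('o, 'a) cat \<Rightarrow> 'o \<Rightarrow> 'o \<Rightarrow> 'o \<Rightarrow> 'a \<Rightarrow> 'a \<Rightarrow> bool" where
  "is_product C A B P p q \<longleftrightarrow> hom C p P A \<and> hom C q P B \<and>
     (\<forall>T u v. hom C u T A \<and> hom C v T B \<longrightarrow> (\<exists>!h. hom C h T P \<and> Comp C p h = u \<and> Comp C q h = v))"

context category
begin

lemma product_projections:
  assumes "is_product C A B P p q" shows "hom C p P A" "hom C q P B"
  using assms unfolding is_product_def by simp_all

lemma product_pair:
  assumes "is_product C A B P p q" "hom C u T A" "hom C v T B"
  obtains h where "hom C h T P" "p \<cdot> h = u" "q \<cdot> h = v"
  using assms unfolding is_product_def by blast

lemma product_ext:
  assumes pr: "is_product C A B P p q" and h: "hom C h T P" and h': "hom C h' T P"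
    and "p \<cdot> h = p \<cdot> h'" "q \<cdot> h = q \<cdot> h'"
  shows "h = h'"
proof -
  have p: "hom C p P A" and q: "hom C q P B"
    and universal: "\<forall>T u v. hom C u T A \<and> hom C v T B \<longrightarrow> (\<exists>!h. hom C h T P \<and> p \<cdot> h = u \<and> q \<cdot> h = v)"
    using pr unfolding is_product_def by simp_all
  have "\<exists>!k. hom C k T P \<and> p \<cdot> k = p \<cdot> h \<and> q \<cdot> k = q \<cdot> h"
    using universal comp_hom[OF h p] comp_hom[OF h q] by simp
  then show ?thesis using h h' assms(4,5) by (elim ex1E) (metis)
qed

lemma terminal_arrow_unique: "is_terminal C T \<Longrightarrow> hom C u A T \<Longrightarrow> hom C v A T \<Longrightarrow> u = v"
  unfolding is_terminal_def using hom_dom_ob by blast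

lemma pullback_over_terminal_is_product:
  assumes T: "is_terminal C T" and tA: "hom C tA A T" and tB: "hom C tB B T"
    and pb: "is_pullback C tA tB P p q"
  shows "is_product C A B P p q"
  unfolding is_product_def
proof (intro conjI allI impI)
  show "hom C p P A" "hom C q P B" using pullback_square[OF pb tA tB] by blast+
  fix T' u v assume "hom C u T' A \<and> hom C v T' B"
  moreover from this have "tA \<cdot> u = tB \<cdot> v"
    using terminal_arrow_unique[OF T] tA tB comp_hom by blast
  ultimately show "\<exists>!h. hom C h T' P \<and> p \<cdot> h = u \<and> q \<cdot> h = v"
    using pullback_universal[OF pb tA tB] by blast
qed

end

locale finitely_complete_category = category +
  assumes finitely_complete: "finitely_complete C"
begin

lemma pullback_exists:
  assumes "hom C f A B" "hom C g D B"
  obtains P p q where "is_pullback C f g P p q"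
  using assms finitely_complete unfolding finitely_complete_def hom_def by metis

lemma product_exists:
  assumes "A \<in> Ob C" "B \<in> Ob C"
  obtains P p q where "is_product C A B P p q"
proof -
  obtain T where T: "is_terminal C T" using finitely_complete unfolding finitely_complete_def by blast
  have "\<exists>!t. hom C t A T" "\<exists>!t. hom C t B T"
    using T assms unfolding is_terminal_def by simp_all
  then obtain tA tB where tA: "hom C tA A T" and tB: "hom C tB B T" by blast
  then obtain P p q where "is_pullback C tA tB P p q" by (rule pullback_exists)
  then show ?thesis using that pullback_over_terminal_is_product[OF T tA tB] by blast
qed

end

context category
begin

lemma reflexive_relationD:
  assumes "reflexive_relation C X S d0 d1 s0"
  shows "hom C d0 S X" "hom C d1 S X" "hom C s0 X S" "d0 \<cdot> s0 = Id C X" "d1 \<cdot> s0 = Id C X"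
  using assms unfolding reflexive_relation_def by simp_all

lemma relation_ext:
  assumes "reflexive_relation C X S d0 d1 s0" "hom C u T S" "hom C v T S"
    and "d0 \<cdot> u = d0 \<cdot> v" "d1 \<cdot> u = d1 \<cdot> v"
  shows "u = v"
  using assms unfolding reflexive_relation_def by blast

lemma equivalence_relation_reflexive:
  "equivalence_relation C X S d0 d1 s0 \<Longrightarrow> reflexive_relation C X S d0 d1 s0"
  unfolding equivalence_relation_def by simp

lemma equivalence_relation_sym:
  assumes E: "equivalence_relation C X S d0 d1 s0" and u: "hom C u T S"
  obtains w where "hom C w T S" "d0 \<cdot> w = d1 \<cdot> u" "d1 \<cdot> w = d0 \<cdot> u"
proof -
  obtain \<sigma> where \<sigma>: "hom C \<sigma> S S" "d0 \<cdot> \<sigma> = d1" "d1 \<cdot> \<sigma> = d0"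
    using E unfolding equivalence_relation_def by blast
  note d = reflexive_relationD[OF equivalence_relation_reflexive[OF E]]
  show ?thesis
    by (rule that[of "\<sigma> \<cdot> u"])
      (use comp_hom[OF u \<sigma>(1)] comp_reassoc[OF \<sigma>(2) u \<sigma>(1) d(1)] comp_reassoc[OF \<sigma>(3) u \<sigma>(1) d(2)] in auto)
qed

lemma equivalence_relation_trans:
  assumes "equivalence_relation C X S d0 d1 s0" "hom C u T S" "hom C v T S" "d1 \<cdot> u = d0 \<cdot> v"
  obtains w where "hom C w T S" "d0 \<cdot> w = d0 \<cdot> u" "d1 \<cdot> w = d1 \<cdot> v"
  using assms unfolding equivalence_relation_def by blast

lemma jointly_extremally_epic_extend:
  assumes jee: "jointly_extremally_epic C a b" and m: "hom C m M Z" "mono C m"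
    and u: "hom C u A M" "m \<cdot> u = a" and v: "hom C v B M" "m \<cdot> v = b" and c: "hom C c M Y"
  obtains p where "hom C p Z Y" "p \<cdot> a = c \<cdot> u" "p \<cdot> b = c \<cdot> v"
proof -
  have a: "hom C a A Z" and b: "hom C b B Z" using comp_hom[OF u(1) m(1)] comp_hom[OF v(1) m(1)] u(2) v(2)
    by simp_all
  then have "\<forall>m' M'. mono C m' \<and> hom C m' M' Z \<and> (\<exists>u. hom C u A M' \<and> m' \<cdot> u = a) \<and>
      (\<exists>v. hom C v B M' \<and> m' \<cdot> v = b) \<longrightarrow> iso C m'"
    using jee unfolding jointly_extremally_epic_def hom_def by simp
  then have "iso C m" using m u v by blast
  then obtain g where g: "hom C g Z M" "g \<cdot> m = Id C M"
    using m(1) unfolding iso_def hom_def by auto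
  show ?thesis
  proof (rule that[of "c \<cdot> g"])
    show "hom C (c \<cdot> g) Z Y" using g(1) c by blast
    show "(c \<cdot> g) \<cdot> a = c \<cdot> u" "(c \<cdot> g) \<cdot> b = c \<cdot> v"
      using comp_assoc[OF a g(1) c] comp_assoc[OF b g(1) c]
        comp_reassoc_id[OF g(2) u(1) m(1) g(1)] comp_reassoc_id[OF g(2) v(1) m(1) g(1)] u(2) v(2)
      by simp_all
  qed
qed

text \<open>The sections of a pullback R \<times>_X S named in the definition of centralize exist and are
  unique, so it suffices to find a connector for one choice of them.\<close>
lemma centralizeI:
  assumes R: "reflexive_relation C X R d0R d1R s0R" and S: "reflexive_relation C X S d0S d1S s0S"
    and connector: "\<And>P pR pS \<sigma>R \<sigma>S. is_pullback C d1R d0S P pR pS \<Longrightarrow>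
      hom C \<sigma>R R P \<Longrightarrow> pR \<cdot> \<sigma>R = Id C R \<Longrightarrow> pS \<cdot> \<sigma>R = s0S \<cdot> d1R \<Longrightarrow>
      hom C \<sigma>S S P \<Longrightarrow> pR \<cdot> \<sigma>S = s0R \<cdot> d0S \<Longrightarrow> pS \<cdot> \<sigma>S = Id C S \<Longrightarrow>
      \<exists>p. hom C p P X \<and> p \<cdot> \<sigma>R = d0R \<and> p \<cdot> \<sigma>S = d1S"
  shows "centralize C X R d0R d1R s0R S d0S d1S s0S"
  unfolding centralize_def
proof (intro allI impI)
  fix P pR pS assume P: "is_pullback C d1R d0S P pR pS"
  note r = reflexive_relationD[OF R] and s = reflexive_relationD[OF S]
  have RS: "R \<in> Ob C" "S \<in> Ob C" using hom_dom_ob[OF r(1)] hom_dom_ob[OF s(1)] .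
  obtain \<sigma>R where \<sigma>R: "hom C \<sigma>R R P" "pR \<cdot> \<sigma>R = Id C R" "pS \<cdot> \<sigma>R = s0S \<cdot> d1R"
    using pullback_lift[OF P r(2) s(1) id_hom[OF RS(1)] comp_hom[OF r(2) s(3)]]
      comp_reassoc_id[OF s(4) r(2) s(3) s(1)] r(2) by auto
  obtain \<sigma>S where \<sigma>S: "hom C \<sigma>S S P" "pR \<cdot> \<sigma>S = s0R \<cdot> d0S" "pS \<cdot> \<sigma>S = Id C S"
    using pullback_lift[OF P r(2) s(1) comp_hom[OF s(1) r(3)] id_hom[OF RS(2)]]
      comp_reassoc_id[OF r(5) s(1) r(3) r(2)] s(1) by auto
  obtain p where p: "hom C p P X" "p \<cdot> \<sigma>R = d0R" "p \<cdot> \<sigma>S = d1S"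
    using connector[OF P \<sigma>R \<sigma>S] by blast
  have "sig = \<sigma>R" if "hom C sig R P" "pR \<cdot> sig = Id C R" "pS \<cdot> sig = s0S \<cdot> d1R" for sig
    using pullback_ext[OF P r(2) s(1) that(1) \<sigma>R(1)] that \<sigma>R by simp
  moreover have "sig = \<sigma>S" if "hom C sig S P" "pR \<cdot> sig = s0R \<cdot> d0S" "pS \<cdot> sig = Id C S" for sig
    using pullback_ext[OF P r(2) s(1) that(1) \<sigma>S(1)] that \<sigma>S by simp
  ultimately show "\<exists>p. hom C p P X \<and>
      (\<forall>sigR. hom C sigR R P \<and> pR \<cdot> sigR = Id C R \<and> pS \<cdot> sigR = s0S \<cdot> d1R \<longrightarrow> p \<cdot> sigR = d0R) \<and>
      (\<forall>sigS. hom C sigS S P \<and> pR \<cdot> sigS = s0R \<cdot> d0S \<and> pS \<cdot> sigS = Id C S \<longrightarrow> p \<cdot> sigS = d1S)"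
    using p by blast
qed

lemma sections_jointly_extremally_epic:
  assumes "Sigma_Maltsev C \<Sigma>" "\<Sigma> d0S s0S"
    and R: "reflexive_relation C X R d0R d1R s0R" and S: "reflexive_relation C X S d0S d1S s0S"
    and P: "is_pullback C d1R d0S P pR pS"
    and \<sigma>R: "hom C \<sigma>R R P" "pR \<cdot> \<sigma>R = Id C R" "pS \<cdot> \<sigma>R = s0S \<cdot> d1R"
    and \<sigma>S: "hom C \<sigma>S S P" "pR \<cdot> \<sigma>S = s0R \<cdot> d0S" "pS \<cdot> \<sigma>S = Id C S"
  shows "jointly_extremally_epic C \<sigma>R \<sigma>S"
proof -
  note r = reflexive_relationD[OF R] and s = reflexive_relationD[OF S]
  have "split_epi C d1R s0R" using r unfolding split_epi_def hom_def by simp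
  then show ?thesis
    using assms(1)[unfolded Sigma_Maltsev_def, rule_format, of d0S s0S d1R s0R P pR pS \<sigma>R \<sigma>S]
      assms(2) P \<sigma>R \<sigma>S r s by (auto simp: hom_def)
qed

end

locale discrete_meet = category +
  fixes X R d0R d1R s0R S d0S d1S s0S
  assumes R: "equivalence_relation C X R d0R d1R s0R"
    and S: "equivalence_relation C X S d0S d1S s0S"
    and discrete: "meet_is_discrete C R d0R d1R S d0S d1S"
begin

lemmas R_hom = reflexive_relationD[OF equivalence_relation_reflexive[OF R]]
lemmas S_hom = reflexive_relationD[OF equivalence_relation_reflexive[OF S]]

lemma middle_unique:
  assumes s: "hom C s T S" and s': "hom C s' T S" and r: "hom C r T R" and r': "hom C r' T R"
    and mid: "d1S \<cdot> s = d0R \<cdot> r" and mid': "d1S \<cdot> s' = d0R \<cdot> r'"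
    and ends: "d0S \<cdot> s = d0S \<cdot> s'" "d1R \<cdot> r = d1R \<cdot> r'"
  shows "s = s' \<and> r = r'"
proof -
  obtain s1 where s1: "hom C s1 T S" "d0S \<cdot> s1 = d1S \<cdot> s" "d1S \<cdot> s1 = d0S \<cdot> s"
    using equivalence_relation_sym[OF S s] .
  obtain s2 where s2: "hom C s2 T S" "d0S \<cdot> s2 = d1S \<cdot> s" "d1S \<cdot> s2 = d1S \<cdot> s'"
    using equivalence_relation_trans[OF S s1(1) s'] s1 ends(1) by metis
  obtain r1 where r1: "hom C r1 T R" "d0R \<cdot> r1 = d1R \<cdot> r'" "d1R \<cdot> r1 = d0R \<cdot> r'"
    using equivalence_relation_sym[OF R r'] .
  obtain r2 where r2: "hom C r2 T R" "d0R \<cdot> r2 = d0R \<cdot> r" "d1R \<cdot> r2 = d0R \<cdot> r'"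
    using equivalence_relation_trans[OF R r r1(1)] r1 ends(2) by metis
  have "d0R \<cdot> r2 = d1R \<cdot> r2"
    using discrete r2 s2 mid mid' unfolding meet_is_discrete_def by metis
  then have "d0R \<cdot> r = d0R \<cdot> r'" using r2 by simp
  then show ?thesis
    using relation_ext[OF equivalence_relation_reflexive[OF S] s s']
      relation_ext[OF equivalence_relation_reflexive[OF R] r r'] ends mid mid' by metis
qed

end

locale middle_comparison = discrete_meet +
  fixes P pR pS N q1 q2 XX \<pi>1 \<pi>2 n e M mN mP
  assumes P: "is_pullback C d1R d0S P pR pS"
    and N: "is_pullback C d1S d0R N q1 q2"
    and XX: "is_product C X X XX \<pi>1 \<pi>2"
    and n: "hom C n N XX" "\<pi>1 \<cdot> n = d0S \<cdot> q1" "\<pi>2 \<cdot> n = d1R \<cdot> q2"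
    and e: "hom C e P XX" "\<pi>1 \<cdot> e = d0R \<cdot> pR" "\<pi>2 \<cdot> e = d1S \<cdot> pS"
    and M: "is_pullback C n e M mN mP"
begin

lemmas P_square = pullback_square[OF P R_hom(2) S_hom(1)]
  and N_square = pullback_square[OF N S_hom(2) R_hom(1)]
  and M_square = pullback_square[OF M n(1) e(1)]
  and XX_proj = product_projections[OF XX]

lemma middle_span_mono: "mono C n"
proof (rule monoI[OF n(1)])
  have ends: "\<pi>1 \<cdot> (n \<cdot> t) = d0S \<cdot> (q1 \<cdot> t)" "\<pi>2 \<cdot> (n \<cdot> t) = d1R \<cdot> (q2 \<cdot> t)"
    and mid: "d1S \<cdot> (q1 \<cdot> t) = d0R \<cdot> (q2 \<cdot> t)" if t: "hom C t T N" for t T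
    using comp_reassoc[OF n(2) t n(1) XX_proj(1)] comp_reassoc[OF n(3) t n(1) XX_proj(2)]
      comp_reassoc[OF N_square(3) t N_square(1) S_hom(2)] comp_assoc[OF t N_square(1) S_hom(1)]
      comp_assoc[OF t N_square(2) R_hom(2)] comp_assoc[OF t N_square(2) R_hom(1)]
    by simp_all
  fix a b T assume a: "hom C a T N" and b: "hom C b T N" and ab: "n \<cdot> a = n \<cdot> b"
  have "q1 \<cdot> a = q1 \<cdot> b \<and> q2 \<cdot> a = q2 \<cdot> b"
    using middle_unique[OF comp_hom[OF a N_square(1)] comp_hom[OF b N_square(1)] comp_hom[OF a N_square(2)] comp_hom[OF b N_square(2)]
      mid[OF a] mid[OF b]] ends[OF a] ends[OF b] ab by simp
  then show "a = b" using pullback_ext[OF N S_hom(2) R_hom(1) a b] by blast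
qed

lemma comparison_mono: "mono C mP"
  using mono_pullback[OF M n(1) e(1) middle_span_mono] .

lemma comparison_lift:
  assumes w: "hom C w T N" and \<sigma>: "hom C \<sigma> T P"
    and "d0S \<cdot> (q1 \<cdot> w) = d0R \<cdot> (pR \<cdot> \<sigma>)" "d1R \<cdot> (q2 \<cdot> w) = d1S \<cdot> (pS \<cdot> \<sigma>)"
  obtains u where "hom C u T M" "mN \<cdot> u = w" "mP \<cdot> u = \<sigma>"
proof -
  have "n \<cdot> w = e \<cdot> \<sigma>"
    using product_ext[OF XX comp_hom[OF w n(1)] comp_hom[OF \<sigma> e(1)]] assms
      comp_reassoc[OF n(2) w n(1) XX_proj(1)] comp_reassoc[OF n(3) w n(1) XX_proj(2)]
      comp_reassoc[OF e(2) \<sigma> e(1) XX_proj(1)] comp_reassoc[OF e(3) \<sigma> e(1) XX_proj(2)]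
      comp_assoc[OF w N_square(1) S_hom(1)] comp_assoc[OF w N_square(2) R_hom(2)]
      comp_assoc[OF \<sigma> P_square(1) R_hom(1)] comp_assoc[OF \<sigma> P_square(2) S_hom(2)] by simp
  then show ?thesis using pullback_lift[OF M n(1) e(1) w \<sigma>] that by blast
qed

text \<open>On generalised elements (x R y S z, x S y' R z) of M, this picks the middle point y'.\<close>
definition middle where "middle = d1S \<cdot> (q1 \<cdot> mN)"

lemma middle_hom: "hom C middle M X"
  unfolding middle_def using M_square(1) N_square(1) S_hom(2) by blast

lemma middle_comp: "hom C u A M \<Longrightarrow> middle \<cdot> u = d1S \<cdot> (q1 \<cdot> (mN \<cdot> u))"
  unfolding middle_def using comp_assoc[OF _ comp_hom[OF M_square(1) N_square(1)] S_hom(2)] comp_assoc[OF _ M_square(1) N_square(1)]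
  by simp

lemma R_section_factors:
  assumes \<sigma>: "hom C \<sigma> R P" "pR \<cdot> \<sigma> = Id C R" "pS \<cdot> \<sigma> = s0S \<cdot> d1R"
  obtains u where "hom C u R M" "mP \<cdot> u = \<sigma>" "middle \<cdot> u = d0R"
proof -
  have s0S: "d0S \<cdot> (s0S \<cdot> d0R) = d0R" "d1S \<cdot> (s0S \<cdot> d0R) = d0R" "d1S \<cdot> (s0S \<cdot> d1R) = d1R"
    using comp_reassoc_id[OF S_hom(4) R_hom(1) S_hom(3) S_hom(1)]
      comp_reassoc_id[OF S_hom(5) R_hom(1) S_hom(3) S_hom(2)]
      comp_reassoc_id[OF S_hom(5) R_hom(2) S_hom(3) S_hom(2)] .
  obtain w where w: "hom C w R N" "q1 \<cdot> w = s0S \<cdot> d0R" "q2 \<cdot> w = Id C R"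
    using pullback_lift[OF N S_hom(2) R_hom(1) comp_hom[OF R_hom(1) S_hom(3)]
        id_hom[OF hom_dom_ob[OF R_hom(1)]]] s0S R_hom(1) by auto
  obtain u where "hom C u R M" "mN \<cdot> u = w" "mP \<cdot> u = \<sigma>"
    using comparison_lift[OF w(1) \<sigma>(1)] w \<sigma> s0S R_hom by auto
  then show ?thesis using that middle_comp w(2) s0S by auto
qed

lemma S_section_factors:
  assumes \<tau>: "hom C \<tau> S P" "pR \<cdot> \<tau> = s0R \<cdot> d0S" "pS \<cdot> \<tau> = Id C S"
  obtains v where "hom C v S M" "mP \<cdot> v = \<tau>" "middle \<cdot> v = d1S"
proof -
  have s0R: "d0R \<cdot> (s0R \<cdot> d1S) = d1S" "d1R \<cdot> (s0R \<cdot> d1S) = d1S" "d0R \<cdot> (s0R \<cdot> d0S) = d0S"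
    using comp_reassoc_id[OF R_hom(4) S_hom(2) R_hom(3) R_hom(1)]
      comp_reassoc_id[OF R_hom(5) S_hom(2) R_hom(3) R_hom(2)]
      comp_reassoc_id[OF R_hom(4) S_hom(1) R_hom(3) R_hom(1)] .
  obtain w where w: "hom C w S N" "q1 \<cdot> w = Id C S" "q2 \<cdot> w = s0R \<cdot> d1S"
    using pullback_lift[OF N S_hom(2) R_hom(1) id_hom[OF hom_dom_ob[OF S_hom(1)]]
        comp_hom[OF S_hom(2) R_hom(3)]] s0R S_hom(2) by auto
  obtain v where "hom C v S M" "mN \<cdot> v = w" "mP \<cdot> v = \<tau>"
    using comparison_lift[OF w(1) \<tau>(1)] w \<tau> s0R S_hom by auto
  then show ?thesis using that middle_comp w(2) S_hom(2) by auto
qed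

end

context discrete_meet
begin

lemma comparison_with_middle:
  assumes fc: "finitely_complete C" and P: "is_pullback C d1R d0S P pR pS"
    and \<sigma>: "hom C \<sigma> R P" "pR \<cdot> \<sigma> = Id C R" "pS \<cdot> \<sigma> = s0S \<cdot> d1R"
    and \<tau>: "hom C \<tau> S P" "pR \<cdot> \<tau> = s0R \<cdot> d0S" "pS \<cdot> \<tau> = Id C S"
  obtains M m c u v where "hom C m M P" "mono C m" "hom C c M X"
    "hom C u R M" "m \<cdot> u = \<sigma>" "c \<cdot> u = d0R" "hom C v S M" "m \<cdot> v = \<tau>" "c \<cdot> v = d1S"
proof -
  interpret finitely_complete_category C by unfold_locales (fact fc)
  have X: "X \<in> Ob C" using hom_cod_ob[OF R_hom(1)] .
  note p = pullback_square[OF P R_hom(2) S_hom(1)]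
  obtain XX \<pi>1 \<pi>2 where XX: "is_product C X X XX \<pi>1 \<pi>2" using product_exists[OF X X] .
  obtain N q1 q2 where N: "is_pullback C d1S d0R N q1 q2" using pullback_exists[OF S_hom(2) R_hom(1)] .
  note q = pullback_square[OF N S_hom(2) R_hom(1)]
  obtain n where n: "hom C n N XX" "\<pi>1 \<cdot> n = d0S \<cdot> q1" "\<pi>2 \<cdot> n = d1R \<cdot> q2"
    using product_pair[OF XX comp_hom[OF q(1) S_hom(1)] comp_hom[OF q(2) R_hom(2)]] .
  obtain e where e: "hom C e P XX" "\<pi>1 \<cdot> e = d0R \<cdot> pR" "\<pi>2 \<cdot> e = d1S \<cdot> pS"
    using product_pair[OF XX comp_hom[OF p(1) R_hom(1)] comp_hom[OF p(2) S_hom(2)]] .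
  obtain M mN mP where M: "is_pullback C n e M mN mP" using pullback_exists[OF n(1) e(1)] .
  interpret middle_comparison C X R d0R d1R s0R S d0S d1S s0S P pR pS N q1 q2 XX \<pi>1 \<pi>2 n e M mN mP
    by unfold_locales (fact P N XX n e M)+
  obtain u where "hom C u R M" "mP \<cdot> u = \<sigma>" "middle \<cdot> u = d0R" using R_section_factors[OF \<sigma>] .
  moreover obtain v where "hom C v S M" "mP \<cdot> v = \<tau>" "middle \<cdot> v = d1S" using S_section_factors[OF \<tau>] .
  ultimately show ?thesis using that[OF M_square(2) comparison_mono middle_hom] by blast
qed

end

theorem proposition3p6:
  fixes C :: "('o, 'a) cat" and \<Sigma> :: "'a \<Rightarrow> 'a \<Rightarrow> bool"
  assumes "finitely_complete C"
    and "fibrational C \<Sigma>"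
    and "Sigma_Maltsev C \<Sigma>"
    and "X \<in> Ob C"
    and "equivalence_relation C X R d0R d1R s0R"
    and "Sigma_equivalence_relation C \<Sigma> X S d0S d1S s0S"
    and "meet_is_discrete C R d0R d1R S d0S d1S"
  shows "centralize C X R d0R d1R s0R S d0S d1S s0S"
proof -
  have \<Sigma>: "\<Sigma> d0S s0S" and S: "equivalence_relation C X S d0S d1S s0S"
    using assms(6) unfolding Sigma_equivalence_relation_def by simp_all
  interpret discrete_meet C X R d0R d1R s0R S d0S d1S s0S
    using assms(1,5,7) S unfolding finitely_complete_def by unfold_locales simp_all
  show ?thesis
  proof (rule centralizeI[OF equivalence_relation_reflexive[OF R] equivalence_relation_reflexive[OF S]])
    fix P pR pS \<sigma>R \<sigma>S assume P: "is_pullback C d1R d0S P pR pS"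
      and \<sigma>R: "hom C \<sigma>R R P" "pR \<cdot> \<sigma>R = Id C R" "pS \<cdot> \<sigma>R = s0S \<cdot> d1R"
      and \<sigma>S: "hom C \<sigma>S S P" "pR \<cdot> \<sigma>S = s0R \<cdot> d0S" "pS \<cdot> \<sigma>S = Id C S"
    have jee: "jointly_extremally_epic C \<sigma>R \<sigma>S"
      using sections_jointly_extremally_epic[OF assms(3) \<Sigma> equivalence_relation_reflexive[OF R]
          equivalence_relation_reflexive[OF S] P \<sigma>R \<sigma>S] .
    obtain M m c u v where m: "hom C m M P" "mono C m" and c: "hom C c M X"
      and u: "hom C u R M" "m \<cdot> u = \<sigma>R" "c \<cdot> u = d0R"
      and v: "hom C v S M" "m \<cdot> v = \<sigma>S" "c \<cdot> v = d1S"
      using comparison_with_middle[OF assms(1) P \<sigma>R \<sigma>S] .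
    from jointly_extremally_epic_extend[OF jee m u(1,2) v(1,2) c] u(3) v(3)
    show "\<exists>p. hom C p P X \<and> p \<cdot> \<sigma>R = d0R \<and> p \<cdot> \<sigma>S = d1S" by metis
  qed
qed
end
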